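(* Let $Q$ be an $s\times t$ real matrix with $s\le t$, let $T$ be a maximal transversal of $Q$ (i.e. $|T|={\rm tdet}(Q)$), and let $a$ be an entry of $T$. Let $R$ be the sum of the entries in the row of $Q$ containing $a$ and $C$ the sum of the entries in the column of $Q$ containing $a$. Then $$R+C\le {\rm tdet}(Q)+t\,a.$$
   Context: For an $s\times t$ matrix $Q=(a_{ij})$ with $s\le t$, a transversal of $Q$ is a set of entries $T=\{a_{1i_1},\dots,a_{si_s}\}$ with $i_1,\dots,i_s\in\{1,\dots,t\}$ pairwise distinct, and $|T|=a_{1i_1}+\cdots+a_{si_s}$. The tropical determinant is ${\rm tdet}(Q)=\max_T|T|$ over all transversals $T$ of $Q$. *)

theory Defs
  imports Complex_Main
begin

text \<open>An s x t real matrix is represented as Q :: nat => nat => real, with rows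
  indexed by {..<s} and columns by {..<t}. A transversal is given by an injective
  choice of columns sigma : {..<s} -> {..<t}; its weight is the sum of the chosen entries.\<close>

definition is_transversal :: "nat \<Rightarrow> nat \<Rightarrow> (nat \<Rightarrow> nat) \<Rightarrow> bool" where
  "is_transversal s t \<sigma> \<longleftrightarrow> inj_on \<sigma> {..<s} \<and> \<sigma> ` {..<s} \<subseteq> {..<t}"

definition transversal_weight :: "(nat \<Rightarrow> nat \<Rightarrow> real) \<Rightarrow> nat \<Rightarrow> (nat \<Rightarrow> nat) \<Rightarrow> real" where
  "transversal_weight Q s \<sigma> = (\<Sum>i<s. Q i (\<sigma> i))"

definition tdet :: "(nat \<Rightarrow> nat \<Rightarrow> real) \<Rightarrow> nat \<Rightarrow> nat \<Rightarrow> real" where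
  "tdet Q s t = Max {transversal_weight Q s \<sigma> | \<sigma>. is_transversal s t \<sigma>}"

end

theory Submission
  imports Defs "HOL-Library.FuncSet"
begin

text \<open>Maximality of \<open>\<sigma>\<close> gives two local inequalities: exchanging the columns of rows \<open>i\<close>
  and \<open>k\<close> cannot increase the weight, so \<open>Q i (\<sigma> k) + Q k (\<sigma> i) \<le> a + Q k (\<sigma> k)\<close>
  with \<open>a = Q i (\<sigma> i)\<close>; and moving row \<open>i\<close> to an unused column \<open>j\<close> cannot either, so
  \<open>Q i j \<le> a\<close>. Summing the first over all \<open>k < s\<close> bounds the column sum plus the part of
  the row sum on used columns by \<open>tdet Q + s a\<close>; summing the second over the \<open>t - s\<close>
  unused columns bounds the rest of the row sum by \<open>(t - s) a\<close>.\<close>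

lemma finite_transversal_weights:
  "finite {transversal_weight Q s \<sigma> | \<sigma>. is_transversal s t \<sigma>}"
proof (rule finite_subset)
  show "{transversal_weight Q s \<sigma> | \<sigma>. is_transversal s t \<sigma>}
        \<subseteq> transversal_weight Q s ` ({..<s} \<rightarrow>\<^sub>E {..<t})"
  proof
    fix x assume "x \<in> {transversal_weight Q s \<sigma> | \<sigma>. is_transversal s t \<sigma>}"
    then obtain \<sigma> where x: "x = transversal_weight Q s \<sigma>" and tr: "is_transversal s t \<sigma>"
      by blast
    have "restrict \<sigma> {..<s} \<in> {..<s} \<rightarrow>\<^sub>E {..<t}"
      using tr unfolding is_transversal_def by auto
    moreover have "transversal_weight Q s (restrict \<sigma> {..<s}) = x"
      unfolding x transversal_weight_def by (rule sum.cong) auto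
    ultimately show "x \<in> transversal_weight Q s ` ({..<s} \<rightarrow>\<^sub>E {..<t})" by force
  qed
qed (simp add: finite_PiE)

lemma transversal_weight_le_tdet:
  "is_transversal s t \<tau> \<Longrightarrow> transversal_weight Q s \<tau> \<le> tdet Q s t"
  unfolding tdet_def by (rule Max_ge[OF finite_transversal_weights]) blast

lemma transversal_weight_fun_upd:
  assumes "i < s"
  shows "transversal_weight Q s (\<sigma>(i := j)) = transversal_weight Q s \<sigma> - Q i (\<sigma> i) + Q i j"
proof -
  have "transversal_weight Q s (\<sigma>(i := j)) = Q i j + (\<Sum>k\<in>{..<s} - {i}. Q k (\<sigma> k))"
    unfolding transversal_weight_def using assms by (simp add: sum.remove)
  moreover have "transversal_weight Q s \<sigma> = Q i (\<sigma> i) + (\<Sum>k\<in>{..<s} - {i}. Q k (\<sigma> k))"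
    unfolding transversal_weight_def using assms by (simp add: sum.remove)
  ultimately show ?thesis by simp
qed

lemma is_transversal_exchange:
  assumes "is_transversal s t \<sigma>" "i < s" "k < s"
  shows "is_transversal s t (\<sigma>(i := \<sigma> k, k := \<sigma> i))"
  using assms unfolding is_transversal_def inj_on_def by (auto split: if_splits)

lemma is_transversal_fun_upd_unused:
  assumes "is_transversal s t \<sigma>" "j < t" "j \<notin> \<sigma> ` {..<s}"
  shows "is_transversal s t (\<sigma>(i := j))"
  using assms unfolding is_transversal_def inj_on_def by (auto split: if_splits)

lemma max_transversal_exchange:
  assumes "is_transversal s t \<sigma>" "transversal_weight Q s \<sigma> = tdet Q s t" "i < s" "k < s"
  shows "Q i (\<sigma> k) + Q k (\<sigma> i) \<le> Q i (\<sigma> i) + Q k (\<sigma> k)"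
proof (cases "k = i")
  case False
  have "transversal_weight Q s (\<sigma>(i := \<sigma> k, k := \<sigma> i)) \<le> transversal_weight Q s \<sigma>"
    using transversal_weight_le_tdet[OF is_transversal_exchange[OF assms(1,3,4)]] assms(2)
    by simp
  with False show ?thesis
    using assms(3,4) by (simp add: transversal_weight_fun_upd)
qed simp

lemma max_transversal_unused_column:
  assumes "is_transversal s t \<sigma>" "transversal_weight Q s \<sigma> = tdet Q s t" "i < s"
    and "j < t" "j \<notin> \<sigma> ` {..<s}"
  shows "Q i j \<le> Q i (\<sigma> i)"
proof -
  have "transversal_weight Q s (\<sigma>(i := j)) \<le> transversal_weight Q s \<sigma>"
    using transversal_weight_le_tdet[OF is_transversal_fun_upd_unused[OF assms(1,4,5)]] assms(2)
    by simp
  then show ?thesis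
    using assms(3) by (simp add: transversal_weight_fun_upd)
qed

lemma row_sum_split_transversal:
  assumes "is_transversal s t \<sigma>"
  shows "(\<Sum>j<t. Q i j) = (\<Sum>k<s. Q i (\<sigma> k)) + (\<Sum>j\<in>{..<t} - \<sigma> ` {..<s}. Q i j)"
proof -
  have inj: "inj_on \<sigma> {..<s}" and img: "\<sigma> ` {..<s} \<subseteq> {..<t}"
    using assms unfolding is_transversal_def by auto
  show ?thesis
    using sum.subset_diff[OF img, of "Q i"] sum.reindex[OF inj, of "Q i"] by (simp add: add.commute)
qed

lemma card_unused_columns:
  assumes "is_transversal s t \<sigma>"
  shows "card ({..<t} - \<sigma> ` {..<s}) = t - s"
  using assms card_Diff_subset card_image unfolding is_transversal_def
  by (metis card_lessThan finite_imageI finite_lessThan)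

theorem lemma2p2:
  fixes Q :: "nat \<Rightarrow> nat \<Rightarrow> real" and s t :: nat and \<sigma> :: "nat \<Rightarrow> nat" and i :: nat
  assumes "s \<le> t"
    and "is_transversal s t \<sigma>"
    and "transversal_weight Q s \<sigma> = tdet Q s t"
    and "i < s"
  shows "(\<Sum>j<t. Q i j) + (\<Sum>k<s. Q k (\<sigma> i)) \<le> tdet Q s t + real t * Q i (\<sigma> i)"
proof -
  let ?a = "Q i (\<sigma> i)" and ?U = "{..<t} - \<sigma> ` {..<s}"
  have "(\<Sum>k<s. Q i (\<sigma> k) + Q k (\<sigma> i)) \<le> (\<Sum>k<s. ?a + Q k (\<sigma> k))"
    by (rule sum_mono) (use max_transversal_exchange[OF assms(2,3,4)] in simp)
  then have used: "(\<Sum>k<s. Q i (\<sigma> k)) + (\<Sum>k<s. Q k (\<sigma> i)) \<le> real s * ?a + tdet Q s t"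
    using assms(3) by (simp add: sum.distrib transversal_weight_def)
  have "(\<Sum>j\<in>?U. Q i j) \<le> (\<Sum>j\<in>?U. ?a)"
    by (rule sum_mono) (use max_transversal_unused_column[OF assms(2,3,4)] in simp)
  then have unused: "(\<Sum>j\<in>?U. Q i j) \<le> real (t - s) * ?a"
    using card_unused_columns[OF assms(2)] by simp
  have "real t * ?a = real s * ?a + real (t - s) * ?a"
    using assms(1) by (simp add: of_nat_diff algebra_simps)
  then show ?thesis
    using used unused row_sum_split_transversal[OF assms(2), of Q i] by linarith
qed

end
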